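(* For any $\beta\in(0,\infty)$ and $\bar\beta\in(0,\infty)^k$, $$d_{TV}(W,T)=\int_0^1\mathbb{P}\Big(F_N(\beta)<\frac{\log x}{N}\Big)dx\quad\text{and}\quad d_{TV}(W,T_k)=\int_0^1\mathbb{P}\Big(F_N(\bar\beta)<\frac{\log x}{N}\Big)dx.$$
   Context: Let $p\ge2$, $N\ge1$. $Y$ is a random $p$-tensor of size $N^p$ with i.i.d. standard Gaussian entries and $W=\frac1{p!}\sum_\pi Y^\pi$ (sum over permutations of $\{1,\dots,p\}$, $Y^\pi_{i_1,\dots,i_p}=Y_{i_{\pi(1)},\dots,i_{\pi(p)}}$). For $1\le r\le k$, $\mu_r$ is a probability measure on a bounded Borel set $\Lambda_r\subset\mathbb{R}$; $u(1),\dots,u(k)\in\mathbb{R}^N$ are independent of each other and of $W$, $u(r)$ with i.i.d. entries of law $\mu_r$; $\mu=\mu_1$, $u=u(1)$. $T=W+\beta N^{-(p-1)/2}u^{\otimes p}$ and $T_k=W+N^{-(p-1)/2}\sum_r\beta_ru(r)^{\otimes p}$, where $(u^{\otimes p})_{i_1,\dots,i_p}=u_{i_1}\cdots u_{i_p}$. $d_{TV}(U,V)=\sup_A|\mathbb{P}(U\in A)-\mathbb{P}(V\in A)|$ over the Borel $\sigma$-algebra generated by symmetric $p$-tensors. With $X_N(\sigma)=N^{-(p-1)/2}\sum Y_{i_1,\dots,i_p}\sigma_{i_1}\cdots\sigma_{i_p}$ and $R(\sigma,\sigma')=\frac1N\sum_i\sigma_i\sigma'_i$: $F_N(\beta)=\frac1N\log\int\exp(\beta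 X_N(\sigma)-\frac{\beta^2N}{2}R(\sigma,\sigma)^p)\mu^{\otimes N}(d\sigma)$ and $F_N(\bar\beta)=\frac1N\log\int\exp\big(\sum_r\beta_rX_N(\sigma(r))-\sum_{r,r'}\frac{\beta_r\beta_{r'}}{2}NR(\sigma(r),\sigma(r'))^p\big)\bar\mu^{\otimes N}(d\bar\sigma)$, where $\bar\mu=\mu_1\otimes\cdots\otimes\mu_k$ and $\bar\sigma$ has rows $\sigma(r)\in\Lambda_r^N$. *)

theory Defs
  imports "HOL-Probability.Probability" "HOL-Combinatorics.Permutations"
begin

definition tidx :: "nat \<Rightarrow> nat \<Rightarrow> nat list set" where
  "tidx N p = {is. length is = p \<and> set is \<subseteq> {..<N}}"

definition tensor_space :: "nat \<Rightarrow> nat \<Rightarrow> (nat list \<Rightarrow> real) measure" where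
  "tensor_space N p = PiM (tidx N p) (\<lambda>_. borel)"

definition std_gauss :: "real measure" where
  "std_gauss = density lborel (\<lambda>x. ennreal (std_normal_density x))"

definition gauss_tensor :: "nat \<Rightarrow> nat \<Rightarrow> (nat list \<Rightarrow> real) measure" where
  "gauss_tensor N p = PiM (tidx N p) (\<lambda>_. std_gauss)"

definition symmetrize :: "nat \<Rightarrow> nat \<Rightarrow> (nat list \<Rightarrow> real) \<Rightarrow> (nat list \<Rightarrow> real)" where
  "symmetrize N p Y = restrict (\<lambda>is. (1 / fact p) *
      (\<Sum>\<pi>\<in>{\<pi>. \<pi> permutes {..<p}}. Y (permute_list \<pi> is))) (tidx N p)"

definition tensor_power :: "nat \<Rightarrow> nat \<Rightarrow> (nat \<Rightarrow> real) \<Rightarrow> (nat list \<Rightarrow> real)" where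
  "tensor_power N p u = restrict (\<lambda>is. prod_list (map u is)) (tidx N p)"

definition XN :: "nat \<Rightarrow> nat \<Rightarrow> (nat list \<Rightarrow> real) \<Rightarrow> (nat \<Rightarrow> real) \<Rightarrow> real" where
  "XN N p Y \<sigma> = real N powr (- (real p - 1) / 2) * (\<Sum>is\<in>tidx N p. Y is * prod_list (map \<sigma> is))"

definition overlap :: "nat \<Rightarrow> (nat \<Rightarrow> real) \<Rightarrow> (nat \<Rightarrow> real) \<Rightarrow> real" where
  "overlap N \<sigma> \<sigma>' = (1 / real N) * (\<Sum>i<N. \<sigma> i * \<sigma>' i)"

definition free_energy :: "nat \<Rightarrow> nat \<Rightarrow> real measure \<Rightarrow> real \<Rightarrow> (nat list \<Rightarrow> real) \<Rightarrow> real" where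
  "free_energy N p \<mu> \<beta> Y = (1 / real N) * ln (\<integral>\<sigma>. exp (\<beta> * XN N p Y \<sigma>
      - \<beta>\<^sup>2 * real N / 2 * overlap N \<sigma> \<sigma> ^ p) \<partial>(PiM {..<N} (\<lambda>_. \<mu>)))"

text \<open>F_N(bar beta), as a function of Y; rows sigma(r), r = 0..k-1 (0-indexed).\<close>
definition free_energy_multi :: "nat \<Rightarrow> nat \<Rightarrow> nat \<Rightarrow> (nat \<Rightarrow> real measure) \<Rightarrow> (nat \<Rightarrow> real)
    \<Rightarrow> (nat list \<Rightarrow> real) \<Rightarrow> real" where
  "free_energy_multi N p k \<mu>s \<beta>s Y = (1 / real N) * ln (\<integral>\<sigma>s. exp (
      (\<Sum>r<k. \<beta>s r * XN N p Y (\<sigma>s r))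
      - (\<Sum>r<k. \<Sum>r'<k. \<beta>s r * \<beta>s r' / 2 * real N * overlap N (\<sigma>s r) (\<sigma>s r') ^ p))
      \<partial>(PiM {..<k} (\<lambda>r. PiM {..<N} (\<lambda>_. \<mu>s r))))"

definition dTV :: "'a measure \<Rightarrow> 'a measure \<Rightarrow> real" where
  "dTV P Q = (SUP A\<in>sets P. \<bar>measure P A - measure Q A\<bar>)"

end

theory Submission
  imports Defs
begin

(* Conditionally on the priors, the spiked tensor is the symmetrization of Y + H(u), where
   H(u) = N^(-(p-1)/2) sum_r beta_r u(r)^(tensor p) is a symmetric tensor.  By the Cameron-Martin
   formula, Y + h has density exp(<Y,h> - |h|^2/2) with respect to the law P of Y, so the law of T is
   the image under symmetrization of L dP, where L(Y) = E_u exp(<Y,H(u)> - |H(u)|^2/2) = exp(N F_N(Y)).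
   Since <W,h> = <Y,h> for symmetric h, L is invariant under symmetrization; hence the total variation
   distance between the images of P and L dP is still the integral of (1 - L)^+ dP, attained on
   {L < 1}, and the layer-cake formula turns it into int_0^1 P(L < x) dx = int_0^1 P(F_N < log x / N) dx.
   Completing the square, <Y,h> - |h|^2/2 <= |Y|^2/2. *)

section \<open>Gaussian shifts\<close>

lemma prob_space_std_gauss: "prob_space std_gauss"
  unfolding std_gauss_def by (rule prob_space_normal_density) simp

lemma sets_std_gauss [simp, measurable_cong]: "sets std_gauss = sets borel"
  unfolding std_gauss_def by simp

lemma std_normal_density_shift:
  "std_normal_density (x - c) = std_normal_density x * exp (x * c - c\<^sup>2 / 2)"
  unfolding std_normal_density_def by (simp add: mult_exp_exp field_simps power2_eq_square)

lemma distr_std_gauss_shift: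
  "distr std_gauss borel (\<lambda>x. x + c) = density std_gauss (\<lambda>x. ennreal (exp (x * c - c\<^sup>2 / 2)))"
proof (rule measure_eqI)
  fix A assume "A \<in> sets (distr std_gauss borel (\<lambda>x. x + c))"
  then have [measurable]: "A \<in> sets borel" by simp
  have [measurable]: "(\<lambda>x. x + c) -` A \<in> sets borel"
    using measurable_sets_borel[of "\<lambda>x. x + c" borel A] by simp
  have "emeasure (distr std_gauss borel (\<lambda>x. x + c)) A = emeasure std_gauss ((\<lambda>x. x + c) -` A)"
    by (simp add: emeasure_distr)
  also have "\<dots> = (\<integral>\<^sup>+x. ennreal (std_normal_density x) * indicator A (x + c) \<partial>lborel)"
    unfolding std_gauss_def
    by (subst emeasure_density) (auto intro!: nn_integral_cong split: split_indicator)
  also have "\<dots> = (\<integral>\<^sup>+x. ennreal (std_normal_density (-c + 1 * x)) * indicator A (-c + 1 * x + c) \<partial>lborel)"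
    by (subst nn_integral_real_affine[where c=1 and t="-c"]) auto
  also have "\<dots> = (\<integral>\<^sup>+x. ennreal (std_normal_density x) *
      (ennreal (exp (x * c - c\<^sup>2 / 2)) * indicator A x) \<partial>lborel)"
    by (intro nn_integral_cong) (simp add: std_normal_density_shift ennreal_mult' mult.assoc)
  also have "\<dots> = emeasure (density std_gauss (\<lambda>x. ennreal (exp (x * c - c\<^sup>2 / 2)))) A"
    unfolding std_gauss_def by (subst emeasure_density) (auto simp: nn_integral_density)
  finally show "emeasure (distr std_gauss borel (\<lambda>x. x + c)) A = \<dots>" .
qed simp

lemma indicator_PiE_eq_prod:
  assumes "finite I" "x \<in> extensional I"
  shows "indicator (Pi\<^sub>E I A) x = (\<Prod>i\<in>I. indicator (A i) (x i) :: 'b::comm_semiring_1)"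
proof (cases "x \<in> Pi\<^sub>E I A")
  case False
  with assms obtain i where "i \<in> I" "x i \<notin> A i" by (auto simp: PiE_def Pi_def)
  with assms False show ?thesis by (subst prod_zero) (auto intro!: bexI[of _ i])
qed (auto simp: PiE_def Pi_def indicator_def intro!: prod.neutral[symmetric])

lemma distr_PiM_componentwise:
  assumes "finite I" and M: "\<And>i. prob_space (M i)" and f[measurable]: "\<And>i. f i \<in> M i \<rightarrow>\<^sub>M M' i"
  shows "distr (PiM I M) (PiM I M') (\<lambda>x. \<lambda>i\<in>I. f i (x i)) = PiM I (\<lambda>i. distr (M i) (M' i) (f i))"
proof -
  interpret M: product_prob_space M by (intro product_prob_spaceI M)
  interpret D: product_prob_space "\<lambda>i. distr (M i) (M' i) (f i)"
    by (intro product_prob_spaceI prob_space.prob_space_distr M f)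
  have [measurable]: "(\<lambda>x. \<lambda>i\<in>I. f i (x i)) \<in> PiM I M \<rightarrow>\<^sub>M PiM I M'"
    by (rule measurable_restrict) measurable
  show ?thesis
  proof (rule D.PiM_eqI[OF \<open>finite I\<close>])
    show "sets (distr (PiM I M) (PiM I M') (\<lambda>x. \<lambda>i\<in>I. f i (x i))) = sets (PiM I (\<lambda>i. distr (M i) (M' i) (f i)))"
      by (simp cong: sets_PiM_cong)
  next
    fix A assume A: "\<And>i. i \<in> I \<Longrightarrow> A i \<in> sets (distr (M i) (M' i) (f i))"
    have "(\<lambda>x. \<lambda>i\<in>I. f i (x i)) -` Pi\<^sub>E I A \<inter> space (PiM I M)
        = Pi\<^sub>E I (\<lambda>i. f i -` A i \<inter> space (M i))"
      by (auto simp: space_PiM PiE_def Pi_def extensional_def)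
    moreover have "Pi\<^sub>E I A \<in> sets (PiM I M')"
      using A by (intro sets_PiM_I_finite \<open>finite I\<close>) auto
    ultimately show "emeasure (distr (PiM I M) (PiM I M') (\<lambda>x. \<lambda>i\<in>I. f i (x i))) (Pi\<^sub>E I A)
        = (\<Prod>i\<in>I. emeasure (distr (M i) (M' i) (f i)) (A i))"
      using A by (simp add: emeasure_distr M.emeasure_PiM \<open>finite I\<close>)
  qed
qed

lemma PiM_density_prod:
  assumes "finite I" and M: "\<And>i. prob_space (M i)"
    and f[measurable]: "\<And>i. f i \<in> borel_measurable (M i)" and D: "\<And>i. prob_space (density (M i) (f i))"
  shows "PiM I (\<lambda>i. density (M i) (f i)) = density (PiM I M) (\<lambda>x. \<Prod>i\<in>I. f i (x i))"
proof -
  interpret M: product_prob_space M by (intro product_prob_spaceI M)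
  interpret D: product_prob_space "\<lambda>i. density (M i) (f i)" by (intro product_prob_spaceI D)
  show ?thesis
  proof (rule D.PiM_eqI[OF \<open>finite I\<close>, symmetric])
    show "sets (density (PiM I M) (\<lambda>x. \<Prod>i\<in>I. f i (x i))) = sets (PiM I (\<lambda>i. density (M i) (f i)))"
      by (simp cong: sets_PiM_cong)
  next
    fix A assume A: "\<And>i. i \<in> I \<Longrightarrow> A i \<in> sets (density (M i) (f i))"
    have "emeasure (density (PiM I M) (\<lambda>x. \<Prod>i\<in>I. f i (x i))) (Pi\<^sub>E I A)
        = (\<integral>\<^sup>+x. (\<Prod>i\<in>I. f i (x i) * indicator (A i) (x i)) \<partial>PiM I M)"
      using A \<open>finite I\<close>
      by (subst emeasure_density)
         (auto simp: prod.distrib space_PiM PiE_iff indicator_PiE_eq_prod intro!: nn_integral_cong sets_PiM_I_finite)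
    also have "\<dots> = (\<Prod>i\<in>I. emeasure (density (M i) (f i)) (A i))"
      using A by (subst M.product_nn_integral_prod[OF \<open>finite I\<close>]) (auto simp: emeasure_density)
    finally show "emeasure (density (PiM I M) (\<lambda>x. \<Prod>i\<in>I. f i (x i))) (Pi\<^sub>E I A)
        = (\<Prod>i\<in>I. emeasure (density (M i) (f i)) (A i))" .
  qed
qed

lemma distr_PiM_std_gauss_shift:
  assumes "finite I"
  shows "distr (PiM I (\<lambda>_. std_gauss)) (PiM I (\<lambda>_. borel)) (\<lambda>Y. \<lambda>i\<in>I. Y i + c i)
       = density (PiM I (\<lambda>_. std_gauss)) (\<lambda>Y. ennreal (exp ((\<Sum>i\<in>I. Y i * c i) - (\<Sum>i\<in>I. (c i)\<^sup>2) / 2)))"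
proof -
  have shift_prob: "prob_space (density std_gauss (\<lambda>x. ennreal (exp (x * c i - (c i)\<^sup>2 / 2))))" for i
    unfolding distr_std_gauss_shift[symmetric] by (intro prob_space.prob_space_distr prob_space_std_gauss) simp
  have "distr (PiM I (\<lambda>_. std_gauss)) (PiM I (\<lambda>_. borel)) (\<lambda>Y. \<lambda>i\<in>I. Y i + c i)
      = PiM I (\<lambda>i. density std_gauss (\<lambda>x. ennreal (exp (x * c i - (c i)\<^sup>2 / 2))))"
    using assms
    by (subst distr_PiM_componentwise[where f="\<lambda>i x. x + c i"]) (simp_all add: prob_space_std_gauss distr_std_gauss_shift)
  also have "\<dots> = density (PiM I (\<lambda>_. std_gauss)) (\<lambda>Y. \<Prod>i\<in>I. ennreal (exp (Y i * c i - (c i)\<^sup>2 / 2)))"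
    using assms by (intro PiM_density_prod prob_space_std_gauss shift_prob) simp_all
  also have "\<dots> = density (PiM I (\<lambda>_. std_gauss))
      (\<lambda>Y. ennreal (exp ((\<Sum>i\<in>I. Y i * c i) - (\<Sum>i\<in>I. (c i)\<^sup>2) / 2)))"
    using assms by (simp add: prod_ennreal exp_sum[symmetric] sum_subtractf sum_divide_distrib)
  finally show ?thesis .
qed

section \<open>Total variation against an invariant density\<close>

lemma abs_set_integral_le_integral_pos_part:
  fixes f :: "'a \<Rightarrow> real"
  assumes f: "integrable M f" and f0: "integral\<^sup>L M f = 0" and B: "B \<in> sets M"
  shows "\<bar>\<integral>x. indicator B x * f x \<partial>M\<bar> \<le> (\<integral>x. max 0 (f x) \<partial>M)"
proof -
  have pos: "integrable M (\<lambda>x. max 0 (f x))"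
    using f by (intro integrable_max) simp_all
  have int_B: "integrable M (\<lambda>x. indicator B x * f x)"
    using integrable_real_mult_indicator[OF B f] by (simp add: mult.commute)
  have "(\<integral>x. indicator B x * f x \<partial>M) \<le> (\<integral>x. max 0 (f x) \<partial>M)"
    by (rule integral_mono[OF int_B pos]) (auto split: split_indicator)
  moreover have "- (\<integral>x. indicator B x * f x \<partial>M) = (\<integral>x. f x - indicator B x * f x \<partial>M)"
    using f0 by (simp add: Bochner_Integration.integral_diff[OF f int_B])
  moreover have "(\<integral>x. f x - indicator B x * f x \<partial>M) \<le> (\<integral>x. max 0 (f x) \<partial>M)"
    using f int_B by (intro integral_mono pos) (auto split: split_indicator)
  ultimately show ?thesis by linarith
qed

lemma measure_distr_diff_distr_density:
  fixes L :: "'a \<Rightarrow> real"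
  assumes G: "prob_space G" and S[measurable]: "S \<in> G \<rightarrow>\<^sub>M T" and L[measurable]: "L \<in> borel_measurable G"
    and L_nonneg: "\<And>Y. Y \<in> space G \<Longrightarrow> 0 \<le> L Y" and L_int: "integrable G L"
    and A[measurable]: "A \<in> sets T"
  shows "measure (distr G T S) A - measure (distr (density G L) T S) A
       = (\<integral>Y. indicator (S -` A \<inter> space G) Y * (1 - L Y) \<partial>G)"
proof -
  interpret G: prob_space G by fact
  define B where "B = S -` A \<inter> space G"
  have B[measurable]: "B \<in> sets G" unfolding B_def by measurable
  have int_B: "integrable G (\<lambda>Y. indicator B Y * L Y)"
    using integrable_real_mult_indicator[OF B L_int] by (simp add: mult.commute)
  have "measure (distr (density G L) T S) A = enn2real (\<integral>\<^sup>+Y. ennreal (L Y) * indicator B Y \<partial>G)"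
    unfolding B_def by (subst measure_distr) (simp_all add: measure_def emeasure_density)
  also have "\<dots> = enn2real (\<integral>\<^sup>+Y. ennreal (indicator B Y * L Y) \<partial>G)"
    by (intro arg_cong[where f=enn2real] nn_integral_cong) (simp split: split_indicator)
  also have "\<dots> = (\<integral>Y. indicator B Y * L Y \<partial>G)"
    by (rule integral_eq_nn_integral[symmetric]) (auto simp: L_nonneg)
  finally have "measure (distr (density G L) T S) A = (\<integral>Y. indicator B Y * L Y \<partial>G)" .
  moreover have "measure (distr G T S) A = (\<integral>Y. indicator B Y \<partial>G)"
    unfolding B_def by (simp add: measure_distr)
  moreover have "integrable G (\<lambda>Y. indicator B Y :: real)"
    using B by (simp add: G.emeasure_eq_measure)
  ultimately show ?thesis
    unfolding B_def[symmetric] right_diff_distrib mult_1_right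
    using int_B by (simp add: Bochner_Integration.integral_diff)
qed

lemma dTV_distr_density_invariant:
  fixes L :: "'a \<Rightarrow> real"
  assumes G: "prob_space G" and S[measurable]: "S \<in> G \<rightarrow>\<^sub>M T" and L[measurable]: "L \<in> borel_measurable T"
    and L_nonneg: "\<And>Y. Y \<in> space G \<Longrightarrow> 0 \<le> L Y"
    and L_invariant: "\<And>Y. Y \<in> space G \<Longrightarrow> L (S Y) = L Y"
    and L_int: "integrable G L" and L_1: "integral\<^sup>L G L = 1"
  shows "dTV (distr G T S) (distr (density G L) T S) = (\<integral>Y. max 0 (1 - L Y) \<partial>G)"
proof -
  interpret G: prob_space G by fact
  have L_G[measurable]: "L \<in> borel_measurable G"
    using measurable_comp[OF S L] by (rule measurable_cong[THEN iffD1, rotated]) (simp add: L_invariant)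
  have diff: "measure (distr G T S) A - measure (distr (density G L) T S) A
      = (\<integral>Y. indicator (S -` A \<inter> space G) Y * (1 - L Y) \<partial>G)" if "A \<in> sets T" for A
    using G S L_G L_nonneg L_int that by (rule measure_distr_diff_distr_density)
  have "(\<integral>Y. 1 - L Y \<partial>G) = 0"
    using L_int L_1 by (simp add: Bochner_Integration.integral_diff G.prob_space)
  then have le: "\<bar>measure (distr G T S) A - measure (distr (density G L) T S) A\<bar> \<le> (\<integral>Y. max 0 (1 - L Y) \<partial>G)"
    if "A \<in> sets T" for A
    unfolding diff[OF that] using that L_int
    by (intro abs_set_integral_le_integral_pos_part) simp_all
  \<comment> \<open>The bound is attained on \<open>{L < 1}\<close>, an \<open>S\<close>-preimage because \<open>L\<close> is \<open>S\<close>-invariant.\<close>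
  define A0 where "A0 = {w \<in> space T. L w < 1}"
  have A0[measurable]: "A0 \<in> sets T" unfolding A0_def by measurable
  have "(\<integral>Y. indicator (S -` A0 \<inter> space G) Y * (1 - L Y) \<partial>G) = (\<integral>Y. max 0 (1 - L Y) \<partial>G)"
    using measurable_space[OF S]
    by (intro Bochner_Integration.integral_cong) (auto simp: A0_def L_invariant split: split_indicator)
  moreover have "0 \<le> (\<integral>Y. max 0 (1 - L Y) \<partial>G)" by (rule integral_nonneg_AE) auto
  ultimately have attained: "\<bar>measure (distr G T S) A0 - measure (distr (density G L) T S) A0\<bar>
      = (\<integral>Y. max 0 (1 - L Y) \<partial>G)"
    by (simp add: diff[OF A0])
  show ?thesis
    unfolding dTV_def
    by (rule cSup_eq_maximum) (use le attained A0 in \<open>auto intro!: image_eqI[where x=A0]\<close>)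
qed

lemma integral_pos_part_one_minus_eq_LBINT:
  fixes L :: "'a \<Rightarrow> real"
  assumes G: "prob_space G" and L[measurable]: "L \<in> borel_measurable G"
    and L_nonneg: "\<And>Y. Y \<in> space G \<Longrightarrow> 0 \<le> L Y"
  shows "(\<integral>Y. max 0 (1 - L Y) \<partial>G) = (LBINT x:{0<..<1}. measure G {Y \<in> space G. L Y < x})"
proof -
  interpret G: prob_space G by fact
  interpret P: pair_sigma_finite G lborel ..
  define m where "m x = measure G {Y \<in> space G. L Y < x}" for x
  have "mono m" unfolding m_def mono_def by (auto intro!: G.finite_measure_mono)
  then have [measurable]: "m \<in> borel_measurable borel" by (rule borel_measurable_mono)
  define K where "K Y x = (indicator {0<..<1::real} x * indicator {Y \<in> space G. L Y < x} Y :: ennreal)"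
    for Y x
  have [measurable]: "case_prod K \<in> borel_measurable (G \<Otimes>\<^sub>M lborel)" unfolding K_def by measurable
  have "(\<integral>\<^sup>+x. K Y x \<partial>lborel) = ennreal (max 0 (1 - L Y))" if "Y \<in> space G" for Y
  proof -
    have "(\<integral>\<^sup>+x. K Y x \<partial>lborel) = (\<integral>\<^sup>+x. indicator {L Y<..<1} x \<partial>lborel)"
      unfolding K_def using L_nonneg[OF that] that
      by (intro nn_integral_cong) (auto split: split_indicator)
    then show ?thesis by (simp add: max_def)
  qed
  then have "(\<integral>\<^sup>+Y. ennreal (max 0 (1 - L Y)) \<partial>G) = (\<integral>\<^sup>+Y. \<integral>\<^sup>+x. K Y x \<partial>lborel \<partial>G)"
    by (intro nn_integral_cong) simp
  also have "\<dots> = (\<integral>\<^sup>+x. \<integral>\<^sup>+Y. K Y x \<partial>G \<partial>lborel)"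
    by (rule P.Fubini'[symmetric]) measurable
  also have "\<dots> = (\<integral>\<^sup>+x. ennreal (indicator {0<..<1} x * m x) \<partial>lborel)"
    unfolding K_def m_def
    by (simp add: nn_integral_cmult G.emeasure_eq_measure ennreal_indicator ennreal_mult')
  finally show ?thesis
    unfolding set_lebesgue_integral_def m_def[symmetric]
    by (simp add: integral_eq_nn_integral m_def)
qed

lemma LBINT_measure_less_eq_LBINT_measure_ln_less:
  fixes L F :: "'a \<Rightarrow> real"
  assumes "0 < n" and "\<And>Y. 0 < L Y" and "\<And>Y. F Y = 1 / n * ln (L Y)"
  shows "(LBINT x:{0<..<1}. measure M {Y \<in> space M. L Y < x})
       = (LBINT x:{0<..<1}. measure M {Y \<in> space M. F Y < ln x / n})"
proof (intro set_lebesgue_integral_cong allI impI)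
  fix x :: real assume "x \<in> {0<..<1}"
  then have "F Y < ln x / n \<longleftrightarrow> L Y < x" for Y
    using assms by (simp add: divide_less_cancel)
  then show "measure M {Y \<in> space M. L Y < x} = measure M {Y \<in> space M. F Y < ln x / n}"
    by simp
qed simp

section \<open>Symmetric tensors\<close>

lemma finite_tidx [simp]: "finite (tidx N p)"
proof -
  have "tidx N p = {xs. set xs \<subseteq> {..<N} \<and> length xs = p}" unfolding tidx_def by auto
  then show ?thesis by (simp add: finite_lists_length_eq)
qed

lemma permute_list_in_tidx: "xs \<in> tidx N p \<Longrightarrow> \<pi> permutes {..<p} \<Longrightarrow> permute_list \<pi> xs \<in> tidx N p"
  unfolding tidx_def by auto

lemma sum_tidx_permute_list:
  assumes "\<pi> permutes {..<p}"
  shows "(\<Sum>xs\<in>tidx N p. f (permute_list \<pi> xs)) = (\<Sum>xs\<in>tidx N p. f xs)"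
proof (rule sum.reindex_bij_witness[where j="permute_list \<pi>" and i="permute_list (inv \<pi>)"])
  have inv: "inv \<pi> permutes {..<p}" using assms by (rule permutes_inv)
  fix xs assume xs: "xs \<in> tidx N p"
  then have "length xs = p" by (simp add: tidx_def)
  then show "permute_list (inv \<pi>) (permute_list \<pi> xs) = xs" "permute_list \<pi> (permute_list (inv \<pi>) xs) = xs"
    using assms inv
    by (simp_all flip: permute_list_compose add: permutes_inv_o)
  show "permute_list \<pi> xs \<in> tidx N p" "permute_list (inv \<pi>) xs \<in> tidx N p"
    using xs assms inv by (simp_all add: permute_list_in_tidx)
qed simp

definition symmetric_tensor :: "nat \<Rightarrow> nat \<Rightarrow> (nat list \<Rightarrow> real) \<Rightarrow> bool" where
  "symmetric_tensor N p h \<longleftrightarrow>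
     (\<forall>xs\<in>tidx N p. \<forall>\<pi>. \<pi> permutes {..<p} \<longrightarrow> h (permute_list \<pi> xs) = h xs)"

lemma symmetrize_add_symmetric:
  assumes "symmetric_tensor N p h"
  shows "symmetrize N p (\<lambda>xs\<in>tidx N p. Y xs + h xs) = (\<lambda>xs\<in>tidx N p. symmetrize N p Y xs + h xs)"
proof
  fix xs
  show "symmetrize N p (\<lambda>xs\<in>tidx N p. Y xs + h xs) xs = (\<lambda>xs\<in>tidx N p. symmetrize N p Y xs + h xs) xs"
  proof (cases "xs \<in> tidx N p")
    case True
    have "(\<Sum>\<pi>\<in>{\<pi>. \<pi> permutes {..<p}}. (\<lambda>xs\<in>tidx N p. Y xs + h xs) (permute_list \<pi> xs))
        = (\<Sum>\<pi>\<in>{\<pi>. \<pi> permutes {..<p}}. Y (permute_list \<pi> xs)) + fact p * h xs"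
      using True assms
      by (simp add: sum.distrib card_permutations permute_list_in_tidx symmetric_tensor_def)
    with True show ?thesis by (simp add: symmetrize_def field_simps)
  qed (simp add: symmetrize_def)
qed

lemma sum_symmetrize_mult_symmetric:
  assumes "symmetric_tensor N p h"
  shows "(\<Sum>xs\<in>tidx N p. symmetrize N p Y xs * h xs) = (\<Sum>xs\<in>tidx N p. Y xs * h xs)"
proof -
  have "(\<Sum>xs\<in>tidx N p. symmetrize N p Y xs * h xs)
      = (1 / fact p) * (\<Sum>\<pi>\<in>{\<pi>. \<pi> permutes {..<p}}. \<Sum>xs\<in>tidx N p. Y (permute_list \<pi> xs) * h (permute_list \<pi> xs))"
    using assms
    by (simp add: symmetrize_def symmetric_tensor_def sum_distrib_left sum_distrib_right sum.swap[of _ "tidx N p"])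
  also have "\<dots> = (1 / fact p) * (\<Sum>\<pi>\<in>{\<pi>. \<pi> permutes {..<p}}. \<Sum>xs\<in>tidx N p. Y xs * h xs)"
    by (simp add: sum_tidx_permute_list[where f="\<lambda>xs. Y xs * h xs"])
  also have "\<dots> = (\<Sum>xs\<in>tidx N p. Y xs * h xs)"
    by (simp add: card_permutations)
  finally show ?thesis .
qed

lemma tensor_space_component [measurable]:
  "xs \<in> tidx N p \<Longrightarrow> (\<lambda>Y. Y xs) \<in> borel_measurable (tensor_space N p)"
  unfolding tensor_space_def by (rule measurable_component_singleton)

lemma sets_gauss_tensor [measurable_cong]: "sets (gauss_tensor N p) = sets (tensor_space N p)"
  unfolding gauss_tensor_def tensor_space_def by (intro sets_PiM_cong) auto

lemma prob_space_gauss_tensor: "prob_space (gauss_tensor N p)"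
  unfolding gauss_tensor_def by (intro prob_space_PiM prob_space_std_gauss)

lemma symmetrize_measurable [measurable]: "symmetrize N p \<in> tensor_space N p \<rightarrow>\<^sub>M tensor_space N p"
proof -
  have [measurable]: "\<pi> \<in> {\<pi>. \<pi> permutes {..<p}} \<Longrightarrow> xs \<in> tidx N p \<Longrightarrow>
      (\<lambda>Y. Y (permute_list \<pi> xs)) \<in> borel_measurable (tensor_space N p)" for \<pi> xs
    by (simp add: permute_list_in_tidx)
  show ?thesis
    unfolding symmetrize_def by (subst (2) tensor_space_def, rule measurable_restrict) measurable
qed

lemma prod_list_measurable:
  fixes M :: "'i \<Rightarrow> real measure"
  assumes "\<And>i. i \<in> I \<Longrightarrow> sets (M i) = sets borel" and "set xs \<subseteq> I"
  shows "(\<lambda>u. prod_list (map u xs)) \<in> borel_measurable (PiM I M)"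
  using assms(2)
proof (induction xs)
  case (Cons x xs)
  then have "(\<lambda>u. u x) \<in> borel_measurable (PiM I M)"
    using measurable_component_singleton[of x I M] assms(1) by (simp cong: measurable_cong_sets)
  with Cons show ?case by (auto intro!: borel_measurable_times)
qed simp

lemma tensor_power_measurable:
  assumes "\<And>i. i < N \<Longrightarrow> sets (M i) = sets borel" and "xs \<in> tidx N p"
  shows "(\<lambda>u. tensor_power N p u xs) \<in> borel_measurable (PiM {..<N} M)"
  using assms prod_list_measurable[of "{..<N}" M xs] by (simp add: tensor_power_def tidx_def)

lemma distr_gauss_tensor_shift:
  "distr (gauss_tensor N p) (tensor_space N p) (\<lambda>Y. \<lambda>xs\<in>tidx N p. Y xs + h xs)
   = density (gauss_tensor N p)
       (\<lambda>Y. ennreal (exp ((\<Sum>xs\<in>tidx N p. Y xs * h xs) - (\<Sum>xs\<in>tidx N p. (h xs)\<^sup>2) / 2)))"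
  unfolding gauss_tensor_def tensor_space_def by (rule distr_PiM_std_gauss_shift) simp

lemma nn_integral_symmetrize_shift:
  assumes h: "symmetric_tensor N p h" and [measurable]: "A \<in> sets (tensor_space N p)"
  shows "(\<integral>\<^sup>+Y. indicator A (\<lambda>xs\<in>tidx N p. symmetrize N p Y xs + h xs) \<partial>gauss_tensor N p)
       = (\<integral>\<^sup>+Y. ennreal (exp ((\<Sum>xs\<in>tidx N p. Y xs * h xs) - (\<Sum>xs\<in>tidx N p. (h xs)\<^sup>2) / 2))
            * indicator A (symmetrize N p Y) \<partial>gauss_tensor N p)"
proof -
  let ?shift = "\<lambda>Y. \<lambda>xs\<in>tidx N p. Y xs + h xs"
  have [measurable]: "?shift \<in> gauss_tensor N p \<rightarrow>\<^sub>M tensor_space N p"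
    unfolding tensor_space_def by (rule measurable_restrict) measurable
  have "(\<integral>\<^sup>+Y. indicator A (\<lambda>xs\<in>tidx N p. symmetrize N p Y xs + h xs) \<partial>gauss_tensor N p)
      = (\<integral>\<^sup>+Y. indicator A (symmetrize N p (?shift Y)) \<partial>gauss_tensor N p)"
    by (simp add: symmetrize_add_symmetric[OF h])
  also have "\<dots> = (\<integral>\<^sup>+Y. indicator A (symmetrize N p Y) \<partial>distr (gauss_tensor N p) (tensor_space N p) ?shift)"
    by (rule nn_integral_distr[symmetric]) measurable
  also have "\<dots> = (\<integral>\<^sup>+Y. ennreal (exp ((\<Sum>xs\<in>tidx N p. Y xs * h xs) - (\<Sum>xs\<in>tidx N p. (h xs)\<^sup>2) / 2))
            * indicator A (symmetrize N p Y) \<partial>gauss_tensor N p)"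
    unfolding distr_gauss_tensor_shift by (rule nn_integral_density) measurable
  finally show ?thesis .
qed

definition spike :: "nat \<Rightarrow> nat \<Rightarrow> nat \<Rightarrow> (nat \<Rightarrow> real) \<Rightarrow> (nat \<Rightarrow> nat \<Rightarrow> real) \<Rightarrow> nat list \<Rightarrow> real" where
  "spike N p k \<beta>s us xs = real N powr (- (real p - 1) / 2) * (\<Sum>r<k. \<beta>s r * tensor_power N p (us r) xs)"

lemma spike_single:
  "spike N p 1 (\<lambda>_. \<beta>) (\<lambda>_. u) xs = \<beta> * real N powr (- (real p - 1) / 2) * tensor_power N p u xs"
  by (simp add: spike_def)

lemma symmetric_tensor_spike: "symmetric_tensor N p (spike N p k \<beta>s us)"
  unfolding symmetric_tensor_def spike_def tensor_power_def
  by (auto simp: permute_list_in_tidx tidx_def simp flip: prod_mset_prod_list permute_list_map)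

lemma spike_measurable:
  assumes "\<And>r. r < k \<Longrightarrow> sets (\<mu>s r) = sets borel" and "xs \<in> tidx N p"
  shows "(\<lambda>us. spike N p k \<beta>s us xs) \<in> borel_measurable (PiM {..<k} (\<lambda>r. PiM {..<N} (\<lambda>_. \<mu>s r)))"
proof -
  have "(\<lambda>us. tensor_power N p (us r) xs) \<in> borel_measurable (PiM {..<k} (\<lambda>r. PiM {..<N} (\<lambda>_. \<mu>s r)))"
    if "r < k" for r
    using measurable_compose[OF measurable_component_singleton[of r "{..<k}" "\<lambda>r. PiM {..<N} (\<lambda>_. \<mu>s r)"]
        tensor_power_measurable[of N "\<lambda>_. \<mu>s r" xs p]] assms that
    by simp
  then show ?thesis unfolding spike_def by measurable
qed

lemma sum_tidx_prod_list: "(\<Sum>xs\<in>tidx N p. prod_list (map f xs)) = (\<Sum>i<N. f i) ^ p"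
  for f :: "nat \<Rightarrow> real"
proof (induction p)
  case 0
  have "tidx N 0 = {[]}" by (auto simp: tidx_def)
  then show ?case by simp
next
  case (Suc p)
  have "bij_betw (\<lambda>(i, ys). i # ys) ({..<N} \<times> tidx N p) (tidx N (Suc p))"
    by (rule bij_betwI[where g="\<lambda>xs. (hd xs, tl xs)"])
       (auto simp: tidx_def length_Suc_conv)
  then have "(\<Sum>xs\<in>tidx N (Suc p). prod_list (map f xs)) = (\<Sum>(i, ys)\<in>{..<N} \<times> tidx N p. f i * prod_list (map f ys))"
    by (simp add: sum.reindex_bij_betw[symmetric] case_prod_beta)
  also have "\<dots> = (\<Sum>i<N. f i) * (\<Sum>ys\<in>tidx N p. prod_list (map f ys))"
    by (simp add: sum.cartesian_product[symmetric] sum_product)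
  finally show ?case using Suc by simp
qed

lemma prod_list_map_mult:
  "prod_list (map (\<lambda>x. f x * g x) xs) = prod_list (map f xs) * (prod_list (map g xs) :: 'a::comm_monoid_mult)"
  by (induction xs) (simp_all add: ac_simps)

lemma sum_tidx_mult_spike:
  "(\<Sum>xs\<in>tidx N p. Y xs * spike N p k \<beta>s us xs) = (\<Sum>r<k. \<beta>s r * XN N p Y (us r))"
  unfolding spike_def XN_def tensor_power_def
  by (simp add: sum_distrib_left sum_distrib_right sum.swap[of _ "tidx N p"] algebra_simps)

lemma sum_tidx_spike_squared:
  assumes "N \<ge> 1"
  shows "(\<Sum>xs\<in>tidx N p. (spike N p k \<beta>s us xs)\<^sup>2)
       = (\<Sum>r<k. \<Sum>r'<k. \<beta>s r * \<beta>s r' * real N * overlap N (us r) (us r') ^ p)"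
proof -
  let ?c = "real N powr (- (real p - 1) / 2)"
  have scale: "?c\<^sup>2 * real N ^ p = real N"
    using assms by (simp add: power2_eq_square powr_add[symmetric] powr_realpow[symmetric])
  have "(\<Sum>xs\<in>tidx N p. (spike N p k \<beta>s us xs)\<^sup>2)
      = (\<Sum>r<k. \<Sum>r'<k. \<beta>s r * \<beta>s r' * ?c\<^sup>2 *
           (\<Sum>xs\<in>tidx N p. prod_list (map (\<lambda>i. us r i * us r' i) xs)))"
    unfolding spike_def tensor_power_def
    by (simp add: power2_eq_square sum_product sum_distrib_left sum.swap[of _ "tidx N p"]
        prod_list_map_mult algebra_simps)
  also have "\<dots> = (\<Sum>r<k. \<Sum>r'<k. \<beta>s r * \<beta>s r' * (?c\<^sup>2 * real N ^ p) * overlap N (us r) (us r') ^ p)"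
    using assms by (simp add: sum_tidx_prod_list overlap_def power_mult_distrib power_divide field_simps)
  also have "\<dots> = (\<Sum>r<k. \<Sum>r'<k. \<beta>s r * \<beta>s r' * real N * overlap N (us r) (us r') ^ p)"
    by (simp only: scale)
  finally show ?thesis .
qed

section \<open>The likelihood ratio of the spiked model\<close>

definition shift_mixture_density :: "'i set \<Rightarrow> 'u measure \<Rightarrow> ('u \<Rightarrow> 'i \<Rightarrow> real) \<Rightarrow> ('i \<Rightarrow> real) \<Rightarrow> real" where
  "shift_mixture_density I U H Y = (\<integral>u. exp ((\<Sum>i\<in>I. Y i * H u i) - (\<Sum>i\<in>I. (H u i)\<^sup>2) / 2) \<partial>U)"

lemma inner_minus_half_norm_le:
  fixes y h :: "'i \<Rightarrow> real"
  shows "(\<Sum>i\<in>I. y i * h i) - (\<Sum>i\<in>I. (h i)\<^sup>2) / 2 \<le> (\<Sum>i\<in>I. (y i)\<^sup>2) / 2"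
proof -
  have "0 \<le> (\<Sum>i\<in>I. (y i - h i)\<^sup>2)" by (rule sum_nonneg) simp
  then show ?thesis
    by (simp add: power2_diff sum_subtractf sum.distrib sum_distrib_left[symmetric] mult.assoc)
qed

lemma integrable_shift_mixture_integrand:
  fixes H :: "'u \<Rightarrow> 'i \<Rightarrow> real"
  assumes "prob_space U" and [measurable]: "\<And>i. i \<in> I \<Longrightarrow> (\<lambda>u. H u i) \<in> borel_measurable U"
  shows "integrable U (\<lambda>u. exp ((\<Sum>i\<in>I. Y i * H u i) - (\<Sum>i\<in>I. (H u i)\<^sup>2) / 2))"
proof (rule Bochner_Integration.integrable_bound)
  show "integrable U (\<lambda>_. exp ((\<Sum>i\<in>I. (Y i)\<^sup>2) / 2))"
    using assms(1) by (simp add: prob_space_def finite_measure.integrable_const)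
  show "AE u in U. norm (exp ((\<Sum>i\<in>I. Y i * H u i) - (\<Sum>i\<in>I. (H u i)\<^sup>2) / 2))
      \<le> norm (exp ((\<Sum>i\<in>I. (Y i)\<^sup>2) / 2))"
    by (intro AE_I2) (simp only: real_norm_def abs_exp_cancel exp_le_cancel_iff inner_minus_half_norm_le)
qed measurable

lemma shift_mixture_density_pos:
  fixes H :: "'u \<Rightarrow> 'i \<Rightarrow> real"
  assumes "prob_space U" and "\<And>i. i \<in> I \<Longrightarrow> (\<lambda>u. H u i) \<in> borel_measurable U"
  shows "0 < shift_mixture_density I U H Y"
proof -
  let ?f = "\<lambda>u. exp ((\<Sum>i\<in>I. Y i * H u i) - (\<Sum>i\<in>I. (H u i)\<^sup>2) / 2)"
  have "integrable U ?f"
    using assms by (rule integrable_shift_mixture_integrand)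
  then have "integral\<^sup>L U ?f = 0 \<longleftrightarrow> (AE u in U. ?f u = 0)"
    by (rule integral_nonneg_eq_0_iff_AE) (intro AE_I2, simp)
  moreover have "\<not> (AE u in U. False)"
    using prob_space.AE_False[OF assms(1)] by simp
  moreover have "0 \<le> integral\<^sup>L U ?f" by (intro integral_nonneg_AE AE_I2) simp
  ultimately show ?thesis unfolding shift_mixture_density_def by (simp add: less_le)
qed

lemma shift_mixture_density_measurable:
  fixes H :: "'u \<Rightarrow> nat list \<Rightarrow> real"
  assumes "prob_space U" and [measurable]: "\<And>xs. xs \<in> tidx N p \<Longrightarrow> (\<lambda>u. H u xs) \<in> borel_measurable U"
  shows "shift_mixture_density (tidx N p) U H \<in> borel_measurable (tensor_space N p)"
proof -
  interpret U: prob_space U by fact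
  show ?thesis
    unfolding shift_mixture_density_def by (rule U.borel_measurable_lebesgue_integral) measurable
qed

lemma spiked_tensor_measurable:
  fixes H :: "'u \<Rightarrow> nat list \<Rightarrow> real"
  assumes [measurable]: "\<And>xs. xs \<in> tidx N p \<Longrightarrow> (\<lambda>u. H u xs) \<in> borel_measurable U"
  shows "(\<lambda>(Y, u). \<lambda>xs\<in>tidx N p. symmetrize N p Y xs + H u xs)
           \<in> gauss_tensor N p \<Otimes>\<^sub>M U \<rightarrow>\<^sub>M tensor_space N p"
  unfolding split_beta' tensor_space_def[of N p] by (rule measurable_restrict) measurable

lemma distr_spiked_eq_distr_density:
  fixes H :: "'u \<Rightarrow> nat list \<Rightarrow> real"
  assumes U: "prob_space U"
    and H[measurable]: "\<And>xs. xs \<in> tidx N p \<Longrightarrow> (\<lambda>u. H u xs) \<in> borel_measurable U"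
    and H_symmetric: "\<And>u. symmetric_tensor N p (H u)"
  shows "distr (gauss_tensor N p \<Otimes>\<^sub>M U) (tensor_space N p)
           (\<lambda>(Y, u). \<lambda>xs\<in>tidx N p. symmetrize N p Y xs + H u xs)
       = distr (density (gauss_tensor N p) (\<lambda>Y. ennreal (shift_mixture_density (tidx N p) U H Y)))
           (tensor_space N p) (symmetrize N p)"
    (is "distr ?GU ?T ?f = distr (density ?G ?L) ?T ?S")
proof (rule measure_eqI)
  interpret G: prob_space ?G by (rule prob_space_gauss_tensor)
  interpret U: prob_space U by (rule U)
  interpret GU: pair_prob_space ?G U ..
  let ?E = "\<lambda>Y u. exp ((\<Sum>xs\<in>tidx N p. Y xs * H u xs) - (\<Sum>xs\<in>tidx N p. (H u xs)\<^sup>2) / 2)"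
  have [measurable]: "?f \<in> ?GU \<rightarrow>\<^sub>M ?T"
    using H by (rule spiked_tensor_measurable)
  have [measurable]: "?L \<in> borel_measurable ?G"
    using shift_mixture_density_measurable[OF U H] by (simp cong: measurable_cong_sets)
  fix A assume "A \<in> sets (distr ?GU ?T ?f)"
  then have A[measurable]: "A \<in> sets ?T" by simp
  have "emeasure (distr ?GU ?T ?f) A = (\<integral>\<^sup>+x. indicator A x \<partial>distr ?GU ?T ?f)"
    by (rule nn_integral_indicator[symmetric]) simp
  also have "\<dots> = (\<integral>\<^sup>+z. indicator A (?f z) \<partial>?GU)"
    by (rule nn_integral_distr) measurable
  also have "\<dots> = (\<integral>\<^sup>+u. \<integral>\<^sup>+Y. indicator A (?f (Y, u)) \<partial>?G \<partial>U)"
    by (rule GU.nn_integral_snd[symmetric]) measurable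
  also have "\<dots> = (\<integral>\<^sup>+Y. \<integral>\<^sup>+u. ennreal (?E Y u) * indicator A (?S Y) \<partial>U \<partial>?G)"
    by (simp add: nn_integral_symmetrize_shift[OF H_symmetric A]) (rule GU.Fubini', measurable)
  also have "\<dots> = (\<integral>\<^sup>+Y. ?L Y * indicator A (?S Y) \<partial>?G)"
    unfolding shift_mixture_density_def
    by (simp add: nn_integral_multc nn_integral_eq_integral integrable_shift_mixture_integrand[OF U H])
  also have "\<dots> = (\<integral>\<^sup>+Y. indicator A (?S Y) \<partial>density ?G ?L)"
    by (rule nn_integral_density[symmetric]) measurable
  also have "\<dots> = (\<integral>\<^sup>+x. indicator A x \<partial>distr (density ?G ?L) ?T ?S)"
    by (rule nn_integral_distr[symmetric]) measurable
  also have "\<dots> = emeasure (distr (density ?G ?L) ?T ?S) A"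
    by (rule nn_integral_indicator) simp
  finally show "emeasure (distr ?GU ?T ?f) A = emeasure (distr (density ?G ?L) ?T ?S) A" .
qed simp

lemma shift_mixture_density_integral:
  fixes H :: "'u \<Rightarrow> nat list \<Rightarrow> real"
  assumes U: "prob_space U"
    and H[measurable]: "\<And>xs. xs \<in> tidx N p \<Longrightarrow> (\<lambda>u. H u xs) \<in> borel_measurable U"
    and H_symmetric: "\<And>u. symmetric_tensor N p (H u)"
  shows "integrable (gauss_tensor N p) (shift_mixture_density (tidx N p) U H)"
    and "(\<integral>Y. shift_mixture_density (tidx N p) U H Y \<partial>gauss_tensor N p) = 1"
proof -
  let ?G = "gauss_tensor N p" and ?T = "tensor_space N p" and ?L = "shift_mixture_density (tidx N p) U H"
  interpret G: prob_space ?G by (rule prob_space_gauss_tensor)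
  interpret U: prob_space U by (rule U)
  interpret GU: pair_prob_space ?G U ..
  have [measurable]: "?L \<in> borel_measurable ?G"
    using shift_mixture_density_measurable[OF U H] by (simp cong: measurable_cong_sets)
  have L_nonneg: "0 \<le> ?L Y" for Y
    using U H by (intro less_imp_le shift_mixture_density_pos)
  have "space ?G = space ?T" by (rule sets_eq_imp_space_eq) (rule sets_gauss_tensor)
  then have "(\<integral>\<^sup>+Y. ennreal (?L Y) \<partial>?G) = emeasure (distr (density ?G ?L) ?T (symmetrize N p)) (space ?T)"
    using measurable_space[OF symmetrize_measurable]
    by (simp add: emeasure_distr emeasure_density Int_absorb1 subset_eq)
       (auto intro!: nn_integral_cong simp: indicator_def)
  also have "\<dots> = 1"
    using prob_space.emeasure_space_1[OF GU.prob_space_distr[OF spiked_tensor_measurable[OF H]]]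
    by (simp add: distr_spiked_eq_distr_density[OF U H H_symmetric, symmetric])
  finally have nn_integral_1: "(\<integral>\<^sup>+Y. ennreal (?L Y) \<partial>?G) = 1" .
  then show "integrable ?G ?L"
    by (intro integrableI_nn_integral_finite[where x=1]) (simp_all add: L_nonneg)
  show "(\<integral>Y. ?L Y \<partial>?G) = 1"
    using nn_integral_1 by (simp add: integral_eq_nn_integral L_nonneg)
qed

lemma dTV_spiked_eq_LBINT_shift_mixture_density:
  fixes H :: "'u \<Rightarrow> nat list \<Rightarrow> real"
  assumes U: "prob_space U"
    and H[measurable]: "\<And>xs. xs \<in> tidx N p \<Longrightarrow> (\<lambda>u. H u xs) \<in> borel_measurable U"
    and H_symmetric: "\<And>u. symmetric_tensor N p (H u)"
  shows "dTV (distr (gauss_tensor N p) (tensor_space N p) (symmetrize N p))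
      (distr (gauss_tensor N p \<Otimes>\<^sub>M U) (tensor_space N p)
        (\<lambda>(Y, u). \<lambda>xs\<in>tidx N p. symmetrize N p Y xs + H u xs))
    = (LBINT x:{0<..<1}. measure (gauss_tensor N p)
        {Y \<in> space (gauss_tensor N p). shift_mixture_density (tidx N p) U H Y < x})"
proof -
  let ?G = "gauss_tensor N p" and ?L = "shift_mixture_density (tidx N p) U H"
  have L_nonneg: "0 \<le> ?L Y" for Y
    using U H by (intro less_imp_le shift_mixture_density_pos)
  have L_symmetrize: "?L (symmetrize N p Y) = ?L Y" for Y
    unfolding shift_mixture_density_def by (simp add: sum_symmetrize_mult_symmetric[OF H_symmetric])
  have [measurable]: "?L \<in> borel_measurable (tensor_space N p)"
    using U H by (rule shift_mixture_density_measurable)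
  then have "?L \<in> borel_measurable ?G" by (simp cong: measurable_cong_sets)
  have "dTV (distr ?G (tensor_space N p) (symmetrize N p)) (distr (density ?G ?L) (tensor_space N p) (symmetrize N p))
      = (\<integral>Y. max 0 (1 - ?L Y) \<partial>?G)"
    using shift_mixture_density_integral[OF U H H_symmetric]
    by (intro dTV_distr_density_invariant prob_space_gauss_tensor L_nonneg L_symmetrize)
       (simp_all cong: measurable_cong_sets)
  also have "\<dots> = (LBINT x:{0<..<1}. measure ?G {Y \<in> space ?G. ?L Y < x})"
    using \<open>?L \<in> borel_measurable ?G\<close>
    by (intro integral_pos_part_one_minus_eq_LBINT prob_space_gauss_tensor L_nonneg)
  finally show ?thesis
    by (simp add: distr_spiked_eq_distr_density[OF U H H_symmetric])
qed

lemma dTV_spiked_eq_LBINT_normalized_log_density: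
  fixes H :: "'u \<Rightarrow> nat list \<Rightarrow> real"
  assumes U: "prob_space U"
    and H: "\<And>xs. xs \<in> tidx N p \<Longrightarrow> (\<lambda>u. H u xs) \<in> borel_measurable U"
    and H_symmetric: "\<And>u. symmetric_tensor N p (H u)"
    and "N \<ge> 1" and F: "\<And>Y. F Y = 1 / real N * ln (shift_mixture_density (tidx N p) U H Y)"
  shows "dTV (distr (gauss_tensor N p) (tensor_space N p) (symmetrize N p))
      (distr (gauss_tensor N p \<Otimes>\<^sub>M U) (tensor_space N p)
        (\<lambda>(Y, u). \<lambda>xs\<in>tidx N p. symmetrize N p Y xs + H u xs))
    = (LBINT x:{0<..<1}. measure (gauss_tensor N p) {Y \<in> space (gauss_tensor N p). F Y < ln x / real N})"
proof -
  have "(LBINT x:{0<..<1}. measure (gauss_tensor N p)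
          {Y \<in> space (gauss_tensor N p). shift_mixture_density (tidx N p) U H Y < x})
      = (LBINT x:{0<..<1}. measure (gauss_tensor N p) {Y \<in> space (gauss_tensor N p). F Y < ln x / real N})"
    using U H \<open>N \<ge> 1\<close> F
    by (intro LBINT_measure_less_eq_LBINT_measure_ln_less shift_mixture_density_pos) simp_all
  with dTV_spiked_eq_LBINT_shift_mixture_density[OF U H H_symmetric] show ?thesis by simp
qed

lemma free_energy_eq_ln_shift_mixture_density:
  assumes "N \<ge> 1"
  shows "free_energy N p \<mu> \<beta> Y
       = 1 / real N * ln (shift_mixture_density (tidx N p) (PiM {..<N} (\<lambda>_. \<mu>))
                           (\<lambda>u. spike N p 1 (\<lambda>_. \<beta>) (\<lambda>_. u)) Y)"
  unfolding free_energy_def shift_mixture_density_def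
  using assms by (simp add: sum_tidx_mult_spike sum_tidx_spike_squared) (simp add: power2_eq_square)

lemma free_energy_multi_eq_ln_shift_mixture_density:
  assumes "N \<ge> 1"
  shows "free_energy_multi N p k \<mu>s \<beta>s Y
       = 1 / real N * ln (shift_mixture_density (tidx N p) (PiM {..<k} (\<lambda>r. PiM {..<N} (\<lambda>_. \<mu>s r)))
                           (spike N p k \<beta>s) Y)"
  unfolding free_energy_multi_def shift_mixture_density_def
  using assms by (simp add: sum_tidx_mult_spike sum_tidx_spike_squared sum_divide_distrib)

lemma dTV_spiked_eq_LBINT_free_energy:
  assumes "N \<ge> 1" and "prob_space \<mu>" and "sets \<mu> = sets borel"
  shows "dTV (distr (gauss_tensor N p) (tensor_space N p) (symmetrize N p))
      (distr (gauss_tensor N p \<Otimes>\<^sub>M PiM {..<N} (\<lambda>_. \<mu>)) (tensor_space N p)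
        (\<lambda>(Y, u). \<lambda>xs\<in>tidx N p. symmetrize N p Y xs
           + \<beta> * real N powr (- (real p - 1) / 2) * tensor_power N p u xs))
    = (LBINT x:{0<..<1}. measure (gauss_tensor N p)
        {Y \<in> space (gauss_tensor N p). free_energy N p \<mu> \<beta> Y < ln x / real N})"
proof -
  have U: "prob_space (PiM {..<N} (\<lambda>_. \<mu>))"
    using assms(2) by (intro prob_space_PiM)
  have H: "(\<lambda>u. spike N p 1 (\<lambda>_. \<beta>) (\<lambda>_. u) xs) \<in> borel_measurable (PiM {..<N} (\<lambda>_. \<mu>))"
    if "xs \<in> tidx N p" for xs
    unfolding spike_single using tensor_power_measurable[of N "\<lambda>_. \<mu>" xs p] assms(3) that by simp
  show ?thesis
    using dTV_spiked_eq_LBINT_normalized_log_density[OF U H symmetric_tensor_spike assms(1)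
        free_energy_eq_ln_shift_mixture_density[OF assms(1)]]
    by (simp only: spike_single)
qed

lemma dTV_spiked_multi_eq_LBINT_free_energy_multi:
  assumes "N \<ge> 1" and "\<And>r. r < k \<Longrightarrow> prob_space (\<mu>s r)" and "\<And>r. r < k \<Longrightarrow> sets (\<mu>s r) = sets borel"
  shows "dTV (distr (gauss_tensor N p) (tensor_space N p) (symmetrize N p))
      (distr (gauss_tensor N p \<Otimes>\<^sub>M PiM {..<k} (\<lambda>r. PiM {..<N} (\<lambda>_. \<mu>s r))) (tensor_space N p)
        (\<lambda>(Y, us). \<lambda>xs\<in>tidx N p. symmetrize N p Y xs + spike N p k \<beta>s us xs))
    = (LBINT x:{0<..<1}. measure (gauss_tensor N p)
        {Y \<in> space (gauss_tensor N p). free_energy_multi N p k \<mu>s \<beta>s Y < ln x / real N})"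
proof -
  have U: "prob_space (PiM {..<k} (\<lambda>r. PiM {..<N} (\<lambda>_. \<mu>s r)))"
    using assms(2) by (intro prob_space_PiM) auto
  have H: "(\<lambda>us. spike N p k \<beta>s us xs) \<in> borel_measurable (PiM {..<k} (\<lambda>r. PiM {..<N} (\<lambda>_. \<mu>s r)))"
    if "xs \<in> tidx N p" for xs
    using assms(3) that by (rule spike_measurable)
  show ?thesis
    by (rule dTV_spiked_eq_LBINT_normalized_log_density[OF U H symmetric_tensor_spike assms(1)
          free_energy_multi_eq_ln_shift_mixture_density[OF assms(1)]])
qed

theorem lemma2:
  fixes p N k :: nat and \<mu>s :: "nat \<Rightarrow> real measure" and \<Lambda>s :: "nat \<Rightarrow> real set"
    and \<beta> :: real and \<beta>s :: "nat \<Rightarrow> real"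
  assumes "p \<ge> 2" and "N \<ge> 1" and "k \<ge> 1"
    and "\<And>r. r < k \<Longrightarrow> prob_space (\<mu>s r)"
    and "\<And>r. r < k \<Longrightarrow> sets (\<mu>s r) = sets borel"
    and "\<And>r. r < k \<Longrightarrow> \<Lambda>s r \<in> sets borel"
    and "\<And>r. r < k \<Longrightarrow> bounded (\<Lambda>s r)"
    and "\<And>r. r < k \<Longrightarrow> measure (\<mu>s r) (\<Lambda>s r) = 1"
    and "\<beta> > 0"
    and "\<And>r. r < k \<Longrightarrow> \<beta>s r > 0"
  shows
    "dTV (distr (gauss_tensor N p) (tensor_space N p) (symmetrize N p))
         (distr (gauss_tensor N p \<Otimes>\<^sub>M PiM {..<N} (\<lambda>_. \<mu>s 0)) (tensor_space N p)
            (\<lambda>(Y, u). restrict (\<lambda>is. symmetrize N p Y is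
               + \<beta> * real N powr (- (real p - 1) / 2) * tensor_power N p u is) (tidx N p)))
     = (LBINT x:{0<..<1}. measure (gauss_tensor N p)
          {Y \<in> space (gauss_tensor N p). free_energy N p (\<mu>s 0) \<beta> Y < ln x / real N})
   \<and> dTV (distr (gauss_tensor N p) (tensor_space N p) (symmetrize N p))
         (distr (gauss_tensor N p \<Otimes>\<^sub>M PiM {..<k} (\<lambda>r. PiM {..<N} (\<lambda>_. \<mu>s r))) (tensor_space N p)
            (\<lambda>(Y, us). restrict (\<lambda>is. symmetrize N p Y is
               + real N powr (- (real p - 1) / 2) * (\<Sum>r<k. \<beta>s r * tensor_power N p (us r) is))
               (tidx N p)))
     = (LBINT x:{0<..<1}. measure (gauss_tensor N p)
          {Y \<in> space (gauss_tensor N p). free_energy_multi N p k \<mu>s \<beta>s Y < ln x / real N})"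
proof -
  have "0 < k" using assms(3) by simp
  then show ?thesis
    using dTV_spiked_eq_LBINT_free_energy[OF assms(2) assms(4,5)[OF \<open>0 < k\<close>]]
      dTV_spiked_multi_eq_LBINT_free_energy_multi[OF assms(2,4,5)]
    unfolding spike_def by simp
qed

end
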